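(* Let $\mathbb{X}$ be a discrete group with identity $\circ$, and let $\mu$ be a finitely supported probability measure on $\mathbb{X}$ satisfying (A1) $\mu(xzx^{-1})=\mu(z)$ for all $x,z\in\mathbb{X}$ and (A2) $\mu(z)=\mu(z^{-1})$ for all $z\in\mathbb{X}$. Fix $z\in\mathbb{X}$ and $n\in\mathbb{N}$. There exists a function $\phi\colon\mathbb{X}^n\times[n+1]\to\mathbb{X}^{n+1}$ such that for all $(w,i)\in\mathbb{X}^n\times[n+1]$: (i) $\mathrm{val}(\phi(w,i))=\mathrm{val}(w)z$; (ii) $\mu^{\otimes(n+1)}(\phi(w,i))=\mu^{\otimes n}(w)\mu(z)$; (iii) $|\phi^{-1}(\phi(w,i))|=1+\ell_z(w)$; (iv) a sequence $\eta\in\mathbb{X}^{n+1}$ is in the image of $\phi$ if and only if $\ell_z(\eta)\neq 0$.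
   Context: $[m]=\{1,\ldots,m\}$. For a sequence $w=(w_1,\ldots,w_m)\in\mathbb{X}^m$: $\mathrm{val}(w):=w_1w_2\cdots w_m$ (the empty product being $\circ$), $\mu^{\otimes m}(w):=\prod_{j=1}^m\mu(w_j)$, and $\ell_z(w):=\sum_{j=1}^m\mathbf{1}\{w_j=(w_{j+1}\cdots w_m)\,z\,(w_{j+1}\cdots w_m)^{-1}\}$, where for $j=m$ the product $w_{j+1}\cdots w_m$ is $\circ$. *)

theory Defs
  imports Complex_Main "HOL-Algebra.Group"
begin

definition gval :: "('a, 'b) monoid_scheme \<Rightarrow> 'a list \<Rightarrow> 'a" where
  "gval G w = foldr (\<lambda>x y. x \<otimes>\<^bsub>G\<^esub> y) w \<one>\<^bsub>G\<^esub>"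

definition mu_prod :: "('a \<Rightarrow> real) \<Rightarrow> 'a list \<Rightarrow> real" where
  "mu_prod \<mu> w = prod_list (map \<mu> w)"

text \<open>ell_z(w): number of positions j (0-based here) with
  w_j = (w_{j+1}...w_m) z (w_{j+1}...w_m)^{-1}.\<close>
definition ell :: "('a, 'b) monoid_scheme \<Rightarrow> 'a \<Rightarrow> 'a list \<Rightarrow> nat" where
  "ell G z w = card {j. j < length w \<and>
     w ! j = gval G (drop (Suc j) w) \<otimes>\<^bsub>G\<^esub> z \<otimes>\<^bsub>G\<^esub> inv\<^bsub>G\<^esub> (gval G (drop (Suc j) w))}"

definition seqs :: "('a, 'b) monoid_scheme \<Rightarrow> nat \<Rightarrow> 'a list set" where
  "seqs G m = {w. set w \<subseteq> carrier G \<and> length w = m}"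

end

theory Submission
  imports Defs
begin

text \<open>Write \<open>c(s) = val(s) z val(s)\<^sup>-\<^sup>1\<close>, so that position \<open>j\<close> of \<open>w\<close> counts towards \<open>\<ell>\<^sub>z(w)\<close>
  iff \<open>w\<^sub>j = c(w\<^sub>j\<^sub>+\<^sub>1 \<dots> w\<^sub>m)\<close>. The map \<open>\<phi>(w, i)\<close> inserts the letter \<open>c(w\<^sub>i \<dots> w\<^sub>n)\<close> in front of
  \<open>w\<^sub>i\<close>. Since \<open>c(s) val(s) = val(s) z\<close>, this multiplies the value by \<open>z\<close> on the right, and by
  conjugation invariance of \<open>\<mu>\<close> the new letter has weight \<open>\<mu>(z)\<close>. The inserted position counts
  in \<open>\<phi>(w, i)\<close>; positions after it see the same suffix as before, and positions before it see a
  suffix whose value is multiplied by \<open>z\<close>, which leaves \<open>c\<close> unchanged. Hence the counted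
  positions of \<open>\<phi>(w, i)\<close> are those of \<open>w\<close> plus the new one, and deleting any counted position
  of \<open>\<eta>\<close> is an inverse of \<open>\<phi>\<close>: the fibre of \<open>\<phi>\<close> over \<open>\<eta>\<close> is in bijection with the counted
  positions of \<open>\<eta>\<close>. Only (A1) is needed.\<close>

lemma gval_Nil [simp]: "gval G [] = \<one>\<^bsub>G\<^esub>"
  by (simp add: gval_def)

lemma gval_Cons [simp]: "gval G (x # xs) = x \<otimes>\<^bsub>G\<^esub> gval G xs"
  by (simp add: gval_def)

lemma mu_prod_append: "mu_prod \<mu> (xs @ ys) = mu_prod \<mu> xs * mu_prod \<mu> ys"
  by (simp add: mu_prod_def)

lemma mu_prod_Cons: "mu_prod \<mu> (x # xs) = \<mu> x * mu_prod \<mu> xs"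
  by (simp add: mu_prod_def)

definition suffix_conj :: "('a, 'b) monoid_scheme \<Rightarrow> 'a \<Rightarrow> 'a list \<Rightarrow> 'a" where
  "suffix_conj G z s = gval G s \<otimes>\<^bsub>G\<^esub> z \<otimes>\<^bsub>G\<^esub> inv\<^bsub>G\<^esub> (gval G s)"

definition marked :: "('a, 'b) monoid_scheme \<Rightarrow> 'a \<Rightarrow> 'a list \<Rightarrow> nat set" where
  "marked G z w = {j. j < length w \<and> w ! j = suffix_conj G z (drop (Suc j) w)}"

definition insert_conj :: "('a, 'b) monoid_scheme \<Rightarrow> 'a \<Rightarrow> 'a list \<Rightarrow> nat \<Rightarrow> 'a list" where
  "insert_conj G z w k = take k w @ suffix_conj G z (drop k w) # drop k w"

text \<open>Positions are 0-based for lists but 1-based in \<open>[n+1]\<close>.\<close>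
definition insertion_map :: "('a, 'b) monoid_scheme \<Rightarrow> 'a \<Rightarrow> 'a list \<times> nat \<Rightarrow> 'a list" where
  "insertion_map G z = (\<lambda>(w, i). insert_conj G z w (i - 1))"

definition delete_at :: "'a list \<Rightarrow> nat \<Rightarrow> 'a list" where
  "delete_at xs j = take j xs @ drop (Suc j) xs"

lemma ell_eq_card_marked: "ell G z w = card (marked G z w)"
  by (simp add: ell_def marked_def suffix_conj_def)

lemma finite_marked: "finite (marked G z w)"
  by (rule finite_subset[of _ "{..<length w}"]) (auto simp: marked_def)

lemma length_insert_conj [simp]: "length (insert_conj G z w k) = Suc (length w)"
  by (simp add: insert_conj_def)

lemma insert_conj_marked: "k \<le> length w \<Longrightarrow> k \<in> marked G z (insert_conj G z w k)"
  by (simp add: marked_def insert_conj_def nth_append)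

lemma marked_insert_conj_Suc:
  assumes "k \<le> j"
  shows "Suc j \<in> marked G z (insert_conj G z w k) \<longleftrightarrow> j \<in> marked G z w"
proof (cases "j < length w")
  case True
  have "insert_conj G z w k ! Suc j = w ! j"
    and "drop (Suc (Suc j)) (insert_conj G z w k) = drop (Suc j) w"
    using assms True by (simp_all add: insert_conj_def nth_append Suc_diff_le)
  then show ?thesis
    using assms True by (simp add: marked_def)
qed (simp add: marked_def)

lemma delete_at_insert_conj: "k \<le> length w \<Longrightarrow> delete_at (insert_conj G z w k) k = w"
  by (simp add: delete_at_def insert_conj_def)

lemma insert_conj_delete_at: "j \<in> marked G z e \<Longrightarrow> insert_conj G z (delete_at e j) j = e"
  unfolding marked_def insert_conj_def delete_at_def
  by (simp add: min_def) (metis id_take_nth_drop)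

lemma set_delete_at: "set (delete_at xs j) \<subseteq> set xs"
  by (auto simp: delete_at_def dest: in_set_takeD in_set_dropD)

lemma length_delete_at: "j < length xs \<Longrightarrow> length (delete_at xs j) = length xs - 1"
  by (simp add: delete_at_def)

context group
begin

lemma gval_closed: "set xs \<subseteq> carrier G \<Longrightarrow> gval G xs \<in> carrier G"
  by (induction xs) auto

lemma gval_append:
  "set xs \<subseteq> carrier G \<Longrightarrow> set ys \<subseteq> carrier G \<Longrightarrow> gval G (xs @ ys) = gval G xs \<otimes> gval G ys"
  by (induction xs) (auto simp: gval_closed m_assoc)

lemma suffix_conj_closed:
  "z \<in> carrier G \<Longrightarrow> set s \<subseteq> carrier G \<Longrightarrow> suffix_conj G z s \<in> carrier G"
  by (simp add: suffix_conj_def gval_closed)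

lemma suffix_conj_mult_gval:
  "z \<in> carrier G \<Longrightarrow> set s \<subseteq> carrier G \<Longrightarrow> suffix_conj G z s \<otimes> gval G s = gval G s \<otimes> z"
  by (simp add: suffix_conj_def gval_closed m_assoc)

lemma suffix_conj_eqI:
  assumes "z \<in> carrier G" "set u \<subseteq> carrier G" "gval G t = gval G u \<otimes> z"
  shows "suffix_conj G z t = suffix_conj G z u"
  using assms gval_closed[of u]
  by (simp add: suffix_conj_def inv_mult_group m_assoc) (simp add: m_assoc[symmetric])

lemma set_insert_conj:
  "z \<in> carrier G \<Longrightarrow> set w \<subseteq> carrier G \<Longrightarrow> set (insert_conj G z w k) \<subseteq> carrier G"
  using suffix_conj_closed[of z "drop k w"]
  by (auto simp: insert_conj_def dest: in_set_takeD in_set_dropD)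

lemma gval_insert_conj:
  assumes z: "z \<in> carrier G" and w: "set w \<subseteq> carrier G"
  shows "gval G (insert_conj G z w k) = gval G w \<otimes> z"
proof -
  let ?t = "take k w" and ?d = "drop k w"
  have t: "set ?t \<subseteq> carrier G" and d: "set ?d \<subseteq> carrier G"
    using w by (auto dest: in_set_takeD in_set_dropD)
  have "gval G (insert_conj G z w k) = gval G ?t \<otimes> (suffix_conj G z ?d \<otimes> gval G ?d)"
    using t d suffix_conj_closed[OF z d] by (simp add: insert_conj_def gval_append)
  also have "\<dots> = gval G ?t \<otimes> gval G ?d \<otimes> z"
    using t d z by (simp add: suffix_conj_mult_gval gval_closed m_assoc)
  also have "\<dots> = gval G w \<otimes> z"
    using gval_append[OF t d] by simp
  finally show ?thesis .
qed

lemma mu_prod_insert_conj: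
  assumes class_fun: "\<forall>x\<in>carrier G. \<forall>y\<in>carrier G. \<mu> (x \<otimes> y \<otimes> inv x) = \<mu> y"
    and z: "z \<in> carrier G" and w: "set w \<subseteq> carrier G"
  shows "mu_prod \<mu> (insert_conj G z w k) = mu_prod \<mu> w * \<mu> z"
proof -
  have "\<mu> (suffix_conj G z (drop k w)) = \<mu> z"
    using class_fun z gval_closed[of "drop k w"] w
    by (auto simp: suffix_conj_def dest: in_set_dropD)
  then show ?thesis
    using mu_prod_append[of \<mu> "take k w" "drop k w"]
    by (simp add: insert_conj_def mu_prod_append mu_prod_Cons)
qed

lemma marked_insert_conj_less:
  assumes z: "z \<in> carrier G" and w: "set w \<subseteq> carrier G" and "j < k" "k \<le> length w"
  shows "j \<in> marked G z (insert_conj G z w k) \<longleftrightarrow> j \<in> marked G z w"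
proof -
  let ?d = "drop (Suc j) w"
  have d: "set ?d \<subseteq> carrier G"
    using w by (auto dest: in_set_dropD)
  have "drop (Suc j) (insert_conj G z w k) = insert_conj G z ?d (k - Suc j)"
    using assms by (simp add: insert_conj_def drop_take)
  then have "suffix_conj G z (drop (Suc j) (insert_conj G z w k)) = suffix_conj G z ?d"
    using suffix_conj_eqI[OF z d gval_insert_conj[OF z d]] by simp
  moreover have "insert_conj G z w k ! j = w ! j"
    using assms by (simp add: insert_conj_def nth_append)
  ultimately show ?thesis
    using assms by (simp add: marked_def)
qed

lemma marked_insert_conj:
  assumes z: "z \<in> carrier G" and w: "set w \<subseteq> carrier G" and k: "k \<le> length w"
  shows "marked G z (insert_conj G z w k)
           = insert k ((\<lambda>j. if j < k then j else Suc j) ` marked G z w)"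
    (is "?L = insert k (?shift ` _)")
proof (intro equalityI subsetI)
  fix j
  assume j: "j \<in> ?L"
  consider "j < k" | "j = k" | "k < j"
    by linarith
  then show "j \<in> insert k (?shift ` marked G z w)"
  proof cases
    case 1
    then show ?thesis using j marked_insert_conj_less[OF z w _ k] by force
  next
    case 3
    then have "j = Suc (j - 1)" "k \<le> j - 1"
      by arith+
    then show ?thesis
      using j marked_insert_conj_Suc[of k "j - 1" G z w] by (auto intro: image_eqI[of _ _ "j - 1"])
  qed simp
next
  fix j
  assume "j \<in> insert k (?shift ` marked G z w)"
  then show "j \<in> ?L"
    using insert_conj_marked[OF k] marked_insert_conj_less[OF z w _ k]
      marked_insert_conj_Suc[of k _ G z w]
    by (auto simp: not_less split: if_splits)
qed

lemma ell_insert_conj: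
  assumes "z \<in> carrier G" "set w \<subseteq> carrier G" "k \<le> length w"
  shows "ell G z (insert_conj G z w k) = Suc (ell G z w)"
proof -
  let ?shift = "\<lambda>j::nat. if j < k then j else Suc j"
  have "inj ?shift"
    by (auto simp: inj_def split: if_splits)
  then have "card (?shift ` marked G z w) = card (marked G z w)"
    by (rule card_image[OF inj_on_subset[OF _ subset_UNIV]])
  moreover have "k \<notin> ?shift ` marked G z w"
    by auto
  ultimately show ?thesis
    unfolding ell_eq_card_marked marked_insert_conj[OF assms]
    by (simp add: finite_marked)
qed

end

lemma insertion_map_fibre:
  assumes e: "e \<in> seqs G (n+1)"
  shows "{p \<in> seqs G n \<times> {1..n+1}. insertion_map G z p = e}
           = (\<lambda>j. (delete_at e j, Suc j)) ` marked G z e"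
proof (intro equalityI subsetI)
  fix p
  assume "p \<in> {p \<in> seqs G n \<times> {1..n+1}. insertion_map G z p = e}"
  then obtain w i where p: "p = (w, i)" "w \<in> seqs G n" "i \<in> {1..n+1}"
      and e_eq: "insert_conj G z w (i - 1) = e"
    by (auto simp: insertion_map_def)
  then have k: "i - 1 \<le> length w"
    by (auto simp: seqs_def)
  have "i - 1 \<in> marked G z e" and "delete_at e (i - 1) = w"
    using insert_conj_marked[OF k] delete_at_insert_conj[OF k] e_eq by auto
  then show "p \<in> (\<lambda>j. (delete_at e j, Suc j)) ` marked G z e"
    using p by (auto intro!: image_eqI[of _ _ "i - 1"])
next
  fix p
  assume "p \<in> (\<lambda>j. (delete_at e j, Suc j)) ` marked G z e"
  then obtain j where p: "p = (delete_at e j, Suc j)" and j: "j \<in> marked G z e"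
    by auto
  then have "j < length e"
    by (simp add: marked_def)
  then have "delete_at e j \<in> seqs G n" and "Suc j \<in> {1..n+1}"
    using e set_delete_at[of e j] length_delete_at[of j e] by (auto simp: seqs_def)
  then show "p \<in> {p \<in> seqs G n \<times> {1..n+1}. insertion_map G z p = e}"
    using p insert_conj_delete_at[OF j] by (simp add: insertion_map_def)
qed

lemma card_insertion_map_fibre:
  "e \<in> seqs G (n+1) \<Longrightarrow> card {p \<in> seqs G n \<times> {1..n+1}. insertion_map G z p = e} = ell G z e"
  unfolding insertion_map_fibre ell_eq_card_marked
  by (rule card_image) (auto simp: inj_on_def)

lemma insertion_map_image_iff:
  assumes "e \<in> seqs G (n+1)"
  shows "e \<in> insertion_map G z ` (seqs G n \<times> {1..n+1}) \<longleftrightarrow> ell G z e \<noteq> 0"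
proof -
  have "e \<in> insertion_map G z ` (seqs G n \<times> {1..n+1})
          \<longleftrightarrow> {p \<in> seqs G n \<times> {1..n+1}. insertion_map G z p = e} \<noteq> {}"
    by blast
  also have "\<dots> \<longleftrightarrow> ell G z e \<noteq> 0"
    unfolding insertion_map_fibre[OF assms] ell_eq_card_marked by (simp add: finite_marked)
  finally show ?thesis .
qed

theorem lemma1:
  fixes G :: "('a, 'b) monoid_scheme" and \<mu> :: "'a \<Rightarrow> real" and z :: 'a and n :: nat
  assumes grp: "group G"
    and nonneg: "\<forall>x\<in>carrier G. \<mu> x \<ge> 0"
    and fin_supp: "finite {x\<in>carrier G. \<mu> x \<noteq> 0}"
    and prob: "(\<Sum>x\<in>{x\<in>carrier G. \<mu> x \<noteq> 0}. \<mu> x) = 1"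
    and A1: "\<forall>x\<in>carrier G. \<forall>y\<in>carrier G. \<mu> (x \<otimes>\<^bsub>G\<^esub> y \<otimes>\<^bsub>G\<^esub> inv\<^bsub>G\<^esub> x) = \<mu> y"
    and A2: "\<forall>y\<in>carrier G. \<mu> y = \<mu> (inv\<^bsub>G\<^esub> y)"
    and z: "z \<in> carrier G"
  shows "\<exists>\<phi> :: 'a list \<times> nat \<Rightarrow> 'a list.
           (\<forall>w\<in>seqs G n. \<forall>i\<in>{1..n+1}.
              \<phi> (w, i) \<in> seqs G (n+1)
            \<and> gval G (\<phi> (w, i)) = gval G w \<otimes>\<^bsub>G\<^esub> z
            \<and> mu_prod \<mu> (\<phi> (w, i)) = mu_prod \<mu> w * \<mu> z
            \<and> card {p \<in> seqs G n \<times> {1..n+1}. \<phi> p = \<phi> (w, i)} = 1 + ell G z w)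
         \<and> (\<forall>\<eta>\<in>seqs G (n+1). \<eta> \<in> \<phi> ` (seqs G n \<times> {1..n+1}) \<longleftrightarrow> ell G z \<eta> \<noteq> 0)"
proof -
  interpret group G by (rule grp)
  let ?\<phi> = "insertion_map G z"
  have "?\<phi> (w, i) \<in> seqs G (n+1)
      \<and> gval G (?\<phi> (w, i)) = gval G w \<otimes>\<^bsub>G\<^esub> z
      \<and> mu_prod \<mu> (?\<phi> (w, i)) = mu_prod \<mu> w * \<mu> z
      \<and> card {p \<in> seqs G n \<times> {1..n+1}. ?\<phi> p = ?\<phi> (w, i)} = 1 + ell G z w"
    if "w \<in> seqs G n" "i \<in> {1..n+1}" for w i
  proof -
    have w: "set w \<subseteq> carrier G" and len: "length w = n" and k: "i - 1 \<le> length w"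
      using that by (auto simp: seqs_def)
    have \<phi>_eq: "?\<phi> (w, i) = insert_conj G z w (i - 1)"
      by (simp add: insertion_map_def)
    have in_seqs: "?\<phi> (w, i) \<in> seqs G (n+1)"
      using set_insert_conj[OF z w] len by (simp add: \<phi>_eq seqs_def)
    then show ?thesis
      using gval_insert_conj[OF z w] mu_prod_insert_conj[OF A1 z w]
        card_insertion_map_fibre[OF in_seqs] ell_insert_conj[OF z w k]
      by (simp add: \<phi>_eq)
  qed
  then show ?thesis
    using insertion_map_image_iff[where G = G and n = n and z = z] by blast
qed

end
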